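(* Let $(Q,B,\mu)$ be a measure space with a non-trivial atomless $\sigma$-finite measure $\mu$, let $0<a<b<1$, and let $\psi:(a,b)\to(0,\infty)$ be continuous with $\inf_{p\in(a,b)}\psi(p)>0$. Then the dual space of $G\psi_{a,b}$ is degenerate: $[G\psi_{a,b}]^*=\{0\}$. Consequently the associate space $[G\psi_{a,b}]'$ is also degenerate, i.e. equals $\{0\}$.
   Context: For $p>0$, $\|f\|_p=\left(\int_Q|f|^p\,d\mu\right)^{1/p}$. $G\psi_{a,b}$ is the space of measurable $f:Q\to\mathbb R$ (modulo $\mu$-a.e. equality) with quasi-norm $\|f\|_{G\psi_{a,b}}:=\sup_{p\in(a,b)}\|f\|_p/\psi(p)<\infty$. The dual space $[G\psi_{a,b}]^*$ is the space of linear functionals on $G\psi_{a,b}$ that are continuous with respect to the topology induced by this quasi-norm. The associate space $[G\psi_{a,b}]'$ is the set of measurable $g$ with $\int_Q|fg|\,d\mu<\infty$ for all $f\in G\psi_{a,b}$. *)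

theory Defs
  imports "HOL-Analysis.Analysis"
begin

definition Lp_qnorm :: "'a measure \<Rightarrow> real \<Rightarrow> ('a \<Rightarrow> real) \<Rightarrow> ennreal" where
  "Lp_qnorm M p f =
     (let I = (\<integral>\<^sup>+ x. ennreal (\<bar>f x\<bar> powr p) \<partial>M)
      in if I = \<infinity> then \<infinity> else ennreal (enn2real I powr (1 / p)))"

definition G_qnorm :: "'a measure \<Rightarrow> (real \<Rightarrow> real) \<Rightarrow> real \<Rightarrow> real \<Rightarrow> ('a \<Rightarrow> real) \<Rightarrow> ennreal" where
  "G_qnorm M \<psi> a b f = (SUP p\<in>{a<..<b}. Lp_qnorm M p f / ennreal (\<psi> p))"

text \<open>The space G psi_{a,b} (as a set of representatives; elements equal a.e. are identified
  via the requirement that functionals respect a.e. equality).\<close>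
definition G_space :: "'a measure \<Rightarrow> (real \<Rightarrow> real) \<Rightarrow> real \<Rightarrow> real \<Rightarrow> ('a \<Rightarrow> real) set" where
  "G_space M \<psi> a b = {f \<in> borel_measurable M. G_qnorm M \<psi> a b f < \<infinity>}"

definition atomless :: "'a measure \<Rightarrow> bool" where
  "atomless M \<longleftrightarrow> (\<forall>A\<in>sets M. 0 < emeasure M A \<longrightarrow>
      (\<exists>B\<in>sets M. B \<subseteq> A \<and> 0 < emeasure M B \<and> emeasure M B < emeasure M A))"

definition G_dual :: "'a measure \<Rightarrow> (real \<Rightarrow> real) \<Rightarrow> real \<Rightarrow> real \<Rightarrow> (('a \<Rightarrow> real) \<Rightarrow> real) set" where
  "G_dual M \<psi> a b = {L.
     (\<forall>f\<in>G_space M \<psi> a b. \<forall>g\<in>G_space M \<psi> a b. (AE x in M. f x = g x) \<longrightarrow> L f = L g) \<and>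
     (\<forall>f\<in>G_space M \<psi> a b. \<forall>g\<in>G_space M \<psi> a b. L (\<lambda>x. f x + g x) = L f + L g) \<and>
     (\<forall>c. \<forall>f\<in>G_space M \<psi> a b. L (\<lambda>x. c * f x) = c * L f) \<and>
     (\<forall>f\<in>G_space M \<psi> a b. \<forall>\<epsilon>>0. \<exists>\<delta>>0. \<forall>g\<in>G_space M \<psi> a b.
         G_qnorm M \<psi> a b (\<lambda>x. g x - f x) < ennreal \<delta> \<longrightarrow> \<bar>L g - L f\<bar> < \<epsilon>)}"

definition G_assoc :: "'a measure \<Rightarrow> (real \<Rightarrow> real) \<Rightarrow> real \<Rightarrow> real \<Rightarrow> ('a \<Rightarrow> real) set" where
  "G_assoc M \<psi> a b = {g \<in> borel_measurable M.
     \<forall>f\<in>G_space M \<psi> a b. (\<integral>\<^sup>+ x. ennreal \<bar>f x * g x\<bar> \<partial>M) < \<infinity>}"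

end

theory Submission
  imports Defs
begin

(* The quasi-norms ||f||_p with p < 1 are far from convex, and this kills every continuous
   linear functional.  In an atomless space, cutting each dyadic level set
   {2^j <= |f| < 2^(j+1)} into n parts of equal measure splits f into pieces f_1, ..., f_n,
   each of which carries at most 2/n of every integral of |f|^p, p <= 1, simultaneously.
   Hence ||n f_i||_p <= n^(1 - 1/p) 2^(1/p) ||f||_p, so the G-norm of n f_i tends to 0 as n
   grows, while L f is the average of the values L (n f_i); continuity of L at 0 forces L f = 0.

   For the associate space, if g is nonzero on a set of positive measure then |g| >= c on a
   set X of finite positive measure.  Cutting X into disjoint pieces D_k of measure r_k ~ 2^-k
   and letting f = 1/r_k on D_k gives  int |f|^p = sum_k r_k^(1-p),  bounded uniformly in
   p < b < 1, so f lies in the G-space, whereas  int |f g| >= c * sum_k 1 = infinity. *)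

section \<open>Atomless measures\<close>

lemma atomless_subset_le_half:
  assumes at: "atomless M" and B: "B \<in> fmeasurable M" and pos: "0 < measure M B"
  shows "\<exists>C\<in>sets M. C \<subseteq> B \<and> 0 < measure M C \<and> 2 * measure M C \<le> measure M B"
proof -
  have "0 < emeasure M B"
    using pos B by (simp add: emeasure_eq_measure2)
  then obtain C where C: "C \<in> sets M" "C \<subseteq> B" "0 < emeasure M C" "emeasure M C < emeasure M B"
    using at B unfolding atomless_def by blast
  have CB: "C \<in> fmeasurable M"
    using B C by (blast intro: fmeasurableI2)
  have C_pos: "0 < measure M C" and C_less: "measure M C < measure M B"
    using C(3,4) B CB by (simp_all add: emeasure_eq_measure2 ennreal_less_iff)
  have Diff: "measure M (B - C) = measure M B - measure M C"
    using B C by (simp add: measurable_measure_Diff)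
  show ?thesis
  proof (cases "2 * measure M C \<le> measure M B")
    case True
    then show ?thesis
      using C C_pos by blast
  next
    case False
    then show ?thesis
      using B C C_less Diff by (intro bexI[of _ "B - C"]) auto
  qed
qed

lemma atomless_small_subset:
  assumes at: "atomless M" and A: "A \<in> fmeasurable M" and pos: "0 < measure M A" and e: "0 < e"
  shows "\<exists>B\<in>sets M. B \<subseteq> A \<and> 0 < measure M B \<and> measure M B < e"
proof -
  have "\<exists>B\<in>sets M. B \<subseteq> A \<and> 0 < measure M B \<and> 2 ^ k * measure M B \<le> measure M A" for k :: nat
  proof (induction k)
    case 0
    then show ?case using A pos by auto
  next
    case (Suc k)
    then obtain B where B: "B \<in> sets M" "B \<subseteq> A" "0 < measure M B" "2 ^ k * measure M B \<le> measure M A"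
      by blast
    then have "B \<in> fmeasurable M"
      using A by (blast intro: fmeasurableI2)
    then obtain C where C: "C \<in> sets M" "C \<subseteq> B" "0 < measure M C" "2 * measure M C \<le> measure M B"
      using atomless_subset_le_half[OF at] B(3) by blast
    have "2 ^ Suc k * measure M C \<le> 2 ^ k * measure M B"
      using C(4) by simp
    also have "\<dots> \<le> measure M A"
      by (rule B(4))
    finally show ?case
      using B C by blast
  qed
  moreover obtain k :: nat where "measure M A / e < 2 ^ k"
    using real_arch_pow[of 2 "measure M A / e"] by auto
  then have "measure M A < 2 ^ k * e"
    using e by (simp add: field_simps)
  ultimately obtain B where B: "B \<in> sets M" "B \<subseteq> A" "0 < measure M B"
      and "2 ^ k * measure M B < 2 ^ k * e"
    by (meson le_less_trans)
  then show ?thesis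
    by (auto simp: mult_less_cancel_left_pos)
qed

lemma exists_half_maximal:
  fixes m :: "'b \<Rightarrow> real"
  assumes "X \<noteq> {}" and bdd: "bdd_above (m ` X)" and nonneg: "\<And>x. x \<in> X \<Longrightarrow> 0 \<le> m x"
  shows "\<exists>x\<in>X. \<forall>y\<in>X. m y \<le> 2 * m x"
proof (cases "Sup (m ` X) \<le> 0")
  case True
  obtain x where "x \<in> X"
    using assms(1) by blast
  moreover have "m y \<le> 2 * m x" if "y \<in> X" for y
    using cSUP_upper[OF that bdd] True nonneg[OF \<open>x \<in> X\<close>] by linarith
  ultimately show ?thesis
    by blast
next
  case False
  then obtain x where "x \<in> X" "Sup (m ` X) / 2 < m x"
    using less_cSUP_iff[OF _ bdd, of "Sup (m ` X) / 2"] assms(1) by auto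
  then show ?thesis
    using cSUP_upper[OF _ bdd] by (intro bexI[of _ x]) fastforce+
qed

lemma exists_half_maximal_subset:
  assumes D: "measure M D \<le> t"
  shows "\<exists>C\<in>sets M. C \<subseteq> A - D \<and> measure M D + measure M C \<le> t \<and>
    (\<forall>C'\<in>sets M. C' \<subseteq> A - D \<longrightarrow> measure M D + measure M C' \<le> t \<longrightarrow> measure M C' \<le> 2 * measure M C)"
proof -
  define X where "X = {C\<in>sets M. C \<subseteq> A - D \<and> measure M D + measure M C \<le> t}"
  have "X \<noteq> {}"
    using D by (auto simp: X_def)
  moreover have "measure M C \<le> t" if "C \<in> X" for C
  proof -
    have "measure M D + measure M C \<le> t"
      using that by (simp add: X_def)
    then show ?thesis
      using measure_nonneg[of M D] by linarith
  qed
  then have "bdd_above (measure M ` X)"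
    by (rule bdd_aboveI2)
  ultimately obtain C where C: "C \<in> X" "\<And>C'. C' \<in> X \<Longrightarrow> measure M C' \<le> 2 * measure M C"
    using exists_half_maximal[of X "measure M"] by auto
  have "measure M C' \<le> 2 * measure M C"
    if "C' \<in> sets M" "C' \<subseteq> A - D" "measure M D + measure M C' \<le> t" for C'
    using C(2)[of C'] that by (simp add: X_def)
  then show ?thesis
    using C(1) unfolding X_def by blast
qed

lemma greedy_measure_chain:
  assumes A: "A \<in> fmeasurable M" and t: "0 \<le> t"
  obtains D where "incseq D" "\<And>k. D k \<in> sets M" "\<And>k. D k \<subseteq> A" "\<And>k. measure M (D k) \<le> t"
    "\<And>k E. E \<in> sets M \<Longrightarrow> E \<subseteq> A - D k \<Longrightarrow> measure M (D k) + measure M E \<le> t \<Longrightarrow>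
      measure M (D k) + measure M E / 2 \<le> measure M (D (Suc k))"
proof -
  define admissible where
    "admissible D C \<longleftrightarrow> C \<in> sets M \<and> C \<subseteq> A - D \<and> measure M D + measure M C \<le> t" for D C
  define next_piece where
    "next_piece D = (SOME C. admissible D C \<and> (\<forall>C'. admissible D C' \<longrightarrow> measure M C' \<le> 2 * measure M C))"
    for D
  have next_piece: "next_piece D \<in> sets M \<and> next_piece D \<subseteq> A - D \<and> measure M D + measure M (next_piece D) \<le> t \<and>
      (\<forall>C'\<in>sets M. C' \<subseteq> A - D \<longrightarrow> measure M D + measure M C' \<le> t \<longrightarrow>
        measure M C' \<le> 2 * measure M (next_piece D))" if "measure M D \<le> t" for D
  proof -
    have "\<exists>C. admissible D C \<and> (\<forall>C'. admissible D C' \<longrightarrow> measure M C' \<le> 2 * measure M C)"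
      using exists_half_maximal_subset[OF that, of A] unfolding admissible_def by blast
    then have "admissible D (next_piece D) \<and>
        (\<forall>C'. admissible D C' \<longrightarrow> measure M C' \<le> 2 * measure M (next_piece D))"
      unfolding next_piece_def by (rule someI_ex)
    then show ?thesis
      by (auto simp: admissible_def)
  qed
  define D where "D k = ((\<lambda>D. D \<union> next_piece D) ^^ k) {}" for k
  have D_Suc: "D (Suc k) = D k \<union> next_piece (D k)" for k
    by (simp add: D_def)
  have extend: "D' \<union> next_piece D' \<in> sets M \<and> D' \<union> next_piece D' \<subseteq> A \<and>
      measure M (D' \<union> next_piece D') = measure M D' + measure M (next_piece D')"
    if "D' \<in> sets M" "D' \<subseteq> A" "measure M D' \<le> t" for D'
  proof -
    have C: "next_piece D' \<in> sets M" "next_piece D' \<subseteq> A - D'"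
      using next_piece[OF that(3)] by auto
    have "measure M (D' \<union> next_piece D') = measure M D' + measure M (next_piece D')"
      using fmeasurableI2[OF A that(2,1)] fmeasurableI2[OF A _ C(1)] C(2)
      by (intro measure_Union) (auto dest: fmeasurableD2)
    then show ?thesis
      using that C by auto
  qed
  have D: "D k \<in> sets M \<and> D k \<subseteq> A \<and> measure M (D k) \<le> t \<and>
      measure M (D (Suc k)) = measure M (D k) + measure M (next_piece (D k))" for k
  proof (induction k)
    case 0
    show ?case
      using t extend[of "{}"] by (simp add: D_def)
  next
    case (Suc k)
    then have "measure M (D (Suc k)) \<le> t"
      using next_piece[of "D k"] by simp
    then show ?case
      using Suc extend[of "D k"] extend[of "D (Suc k)"] by (simp add: D_Suc)
  qed
  show ?thesis
  proof (rule that)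
    show "incseq D"
      by (rule incseq_SucI) (simp add: D_Suc)
    show "D k \<in> sets M" "D k \<subseteq> A" "measure M (D k) \<le> t" for k
      using D by blast+
    fix k E
    assume "E \<in> sets M" "E \<subseteq> A - D k" "measure M (D k) + measure M E \<le> t"
    then have "measure M E \<le> 2 * measure M (next_piece (D k))"
      using next_piece D[of k] by blast
    then show "measure M (D k) + measure M E / 2 \<le> measure M (D (Suc k))"
      using D[of k] by linarith
  qed
qed

lemma exists_saturated_subset:
  assumes A: "A \<in> fmeasurable M" and t: "0 \<le> t"
  obtains U where "U \<in> sets M" "U \<subseteq> A" "measure M U \<le> t"
    "\<And>E. E \<in> sets M \<Longrightarrow> E \<subseteq> A - U \<Longrightarrow> measure M U + measure M E \<le> t \<Longrightarrow> measure M E = 0"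
proof -
  obtain D where D: "incseq D" "\<And>k. D k \<in> sets M" "\<And>k. D k \<subseteq> A" "\<And>k. measure M (D k) \<le> t"
    and grow: "\<And>k E. E \<in> sets M \<Longrightarrow> E \<subseteq> A - D k \<Longrightarrow> measure M (D k) + measure M E \<le> t \<Longrightarrow>
      measure M (D k) + measure M E / 2 \<le> measure M (D (Suc k))"
    using greedy_measure_chain[OF A t] by blast
  define U where "U = (\<Union>k. D k)"
  have U: "U \<in> sets M" "U \<subseteq> A"
    using D by (auto simp: U_def)
  then have U_fin: "U \<in> fmeasurable M"
    using A by (blast intro: fmeasurableI2)
  have "(\<lambda>k. measure M (D k)) \<longlonglongrightarrow> measure M U"
    unfolding U_def using D(1,2) U_fin by (intro Lim_measure_incseq) (auto simp: U_def fmeasurableD2)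
  then have "measure M U \<le> t"
    using D(4) by (intro LIMSEQ_le_const2) auto
  moreover have "measure M E = 0"
    if E: "E \<in> sets M" "E \<subseteq> A - U" "measure M U + measure M E \<le> t" for E
  proof -
    \<comment> \<open>\<open>E\<close> stays admissible at every step, so every greedy step gains at least half of its measure\<close>
    have step: "measure M (D k) + measure M E / 2 \<le> measure M (D (Suc k))" for k
    proof (rule grow)
      have "D k \<subseteq> U"
        by (auto simp: U_def)
      then have "measure M (D k) \<le> measure M U"
        using D(2) U_fin by (blast intro: measure_mono_fmeasurable)
      then show "measure M (D k) + measure M E \<le> t"
        using E(3) by linarith
      show "E \<in> sets M" "E \<subseteq> A - D k"
        using E \<open>D k \<subseteq> U\<close> by auto
    qed
    have linear: "real k * (measure M E / 2) \<le> measure M (D k)" for k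
    proof (induction k)
      case (Suc k)
      then show ?case
        using step[of k] by (simp add: algebra_simps)
    qed simp
    have bounded: "real k * (measure M E / 2) \<le> t" for k
      using linear[of k] D(4)[of k] by linarith
    have "\<not> 0 < measure M E"
    proof
      assume "0 < measure M E"
      then obtain k :: nat where "t < real k * (measure M E / 2)"
        using reals_Archimedean3[of "measure M E / 2"] by auto
      then show False
        using bounded[of k] by linarith
    qed
    then show ?thesis
      using measure_nonneg[of M E] by linarith
  qed
  ultimately show ?thesis
    using that U by blast
qed

lemma atomless_intermediate_measure:
  assumes at: "atomless M" and A: "A \<in> fmeasurable M" and t: "0 \<le> t" "t \<le> measure M A"
  shows "\<exists>B\<in>sets M. B \<subseteq> A \<and> measure M B = t"
proof -
  obtain U where U: "U \<in> sets M" "U \<subseteq> A" "measure M U \<le> t"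
    and saturated: "\<And>E. E \<in> sets M \<Longrightarrow> E \<subseteq> A - U \<Longrightarrow> measure M U + measure M E \<le> t \<Longrightarrow> measure M E = 0"
    using exists_saturated_subset[OF A t(1)] by blast
  have "\<not> measure M U < t"
  proof
    assume less: "measure M U < t"
    have "0 < measure M (A - U)"
      using less t U A by (simp add: measurable_measure_Diff)
    then obtain E where "E \<in> sets M" "E \<subseteq> A - U" "0 < measure M E" "measure M E < t - measure M U"
      using atomless_small_subset[OF at fmeasurable_Diff[OF A U(1)], of "t - measure M U"] less by auto
    then show False
      using saturated[of E] by auto
  qed
  then show ?thesis
    using U by (intro bexI[of _ U]) auto
qed

lemma atomless_decreasing_chain:
  fixes r :: "nat \<Rightarrow> real"
  assumes at: "atomless M" and A: "A \<in> fmeasurable M"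
    and r: "\<And>k. 0 \<le> r k" and sum_r: "\<And>k. (\<Sum>j<k. r j) \<le> measure M A"
  obtains R where "R 0 = A" "decseq R" "\<And>k. R k \<in> sets M"
    "\<And>k. measure M (R k) = measure M A - (\<Sum>j<k. r j)"
proof -
  define shrink where
    "shrink k R = (SOME R'. R' \<in> sets M \<and> R' \<subseteq> R \<and> measure M R' = measure M R - r k)" for k R
  have shrink: "shrink k R \<in> sets M \<and> shrink k R \<subseteq> R \<and> measure M (shrink k R) = measure M R - r k"
    if "R \<in> sets M" "R \<subseteq> A" "r k \<le> measure M R" for k R
  proof -
    have "0 \<le> measure M R - r k" "measure M R - r k \<le> measure M R"
      using that(3) r[of k] by auto
    then have "\<exists>R'. R' \<in> sets M \<and> R' \<subseteq> R \<and> measure M R' = measure M R - r k"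
      using atomless_intermediate_measure[OF at fmeasurableI2[OF A that(2,1)]] by blast
    then show ?thesis
      unfolding shrink_def by (rule someI_ex)
  qed
  define R where "R = rec_nat A shrink"
  have R: "R k \<in> sets M \<and> R k \<subseteq> A \<and> measure M (R k) = measure M A - (\<Sum>j<k. r j)" for k
  proof (induction k)
    case 0
    then show ?case
      using A by (simp add: R_def)
  next
    case (Suc k)
    moreover have "r k \<le> measure M (R k)"
      using Suc sum_r[of "Suc k"] by simp
    ultimately show ?case
      using shrink[of "R k" k] by (auto simp: R_def)
  qed
  have "decseq R"
  proof (rule decseq_SucI)
    fix k
    have "r k \<le> measure M (R k)"
      using R[of k] sum_r[of "Suc k"] by simp
    then show "R (Suc k) \<subseteq> R k"
      using shrink[of "R k" k] R[of k] by (simp add: R_def)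
  qed
  show ?thesis
  proof (rule that)
    show "R 0 = A"
      by (simp add: R_def)
  qed (use R \<open>decseq R\<close> in blast)+
qed

lemma decseq_UN_diff:
  assumes "decseq R"
  shows "(\<Union>i<m. R i - R (Suc i)) = R 0 - R m"
proof (induction m)
  case (Suc m)
  have "R (Suc m) \<subseteq> R m" "R m \<subseteq> R 0"
    using assms by (auto simp: decseq_def)
  with Suc show ?case
    by (auto simp: lessThan_Suc)
qed simp

lemma decseq_diff_disjoint:
  assumes "decseq R" "i < j"
  shows "(R i - R (Suc i)) \<inter> R j = {}"
proof -
  have "R j \<subseteq> R (Suc i)"
    using decseqD[OF assms(1), of "Suc i" j] assms(2) by simp
  then show ?thesis
    by blast
qed

lemma atomless_disjoint_family_measures:
  fixes r :: "nat \<Rightarrow> real"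
  assumes at: "atomless M" and A: "A \<in> fmeasurable M"
    and r: "\<And>k. 0 \<le> r k" and sum_r: "\<And>k. (\<Sum>j<k. r j) \<le> measure M A"
  shows "\<exists>D. disjoint_family D \<and> (\<forall>k. D k \<in> sets M \<and> D k \<subseteq> A \<and> measure M (D k) = r k)"
proof -
  obtain R where R: "R 0 = A" "decseq R" "\<And>k. R k \<in> sets M"
    "\<And>k. measure M (R k) = measure M A - (\<Sum>j<k. r j)"
    using atomless_decreasing_chain[OF at A r sum_r] by blast
  have sub: "R k \<subseteq> A" for k
    using R(1,2) by (auto simp: decseq_def)
  have "disjoint_family (\<lambda>k. R k - R (Suc k))"
    unfolding disjoint_family_on_def
  proof (intro ballI impI)
    fix i j :: nat
    assume "i \<noteq> j"
    then consider "i < j" | "j < i"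
      by linarith
    then show "(R i - R (Suc i)) \<inter> (R j - R (Suc j)) = {}"
      by cases (use decseq_diff_disjoint[OF R(2)] in blast)+
  qed
  moreover have "measure M (R k - R (Suc k)) = r k" for k
    using R(2,3,4) fmeasurableI2[OF A sub R(3)] by (simp add: measurable_measure_Diff decseq_Suc_iff)
  ultimately show ?thesis
    using R(3) sub by (intro exI[of _ "\<lambda>k. R k - R (Suc k)"]) blast
qed

lemma decseq_truncated_partition:
  fixes R :: "nat \<Rightarrow> 'a set" and n :: nat
  assumes R: "decseq R" and n: "0 < n"
  defines "P \<equiv> \<lambda>i. if Suc i < n then R i - R (Suc i) else R i"
  shows "disjoint_family_on P {..<n}" "(\<Union>i<n. P i) = R 0"
proof -
  show "disjoint_family_on P {..<n}"
    unfolding disjoint_family_on_def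
  proof (intro ballI impI)
    fix i j assume "i \<in> {..<n}" "j \<in> {..<n}" "i \<noteq> j"
    then consider "i < j" "Suc i < n" | "j < i" "Suc j < n"
      by fastforce
    then show "P i \<inter> P j = {}"
    proof cases
      case 1
      then have "P i \<inter> R j = {}" "P j \<subseteq> R j"
        using decseq_diff_disjoint[OF R 1(1)] by (auto simp: P_def)
      then show ?thesis
        by blast
    next
      case 2
      then have "P j \<inter> R i = {}" "P i \<subseteq> R i"
        using decseq_diff_disjoint[OF R 2(1)] by (auto simp: P_def)
      then show ?thesis
        by blast
    qed
  qed
  have "{..<n} = insert (n - 1) {..<n - 1}"
    using n by auto
  then have "(\<Union>i<n. P i) = R (n - 1) \<union> (\<Union>i<n - 1. R i - R (Suc i))"
    using n by (auto simp: P_def)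
  also have "\<dots> = R 0"
    using R by (auto simp: decseq_UN_diff decseq_def)
  finally show "(\<Union>i<n. P i) = R 0" .
qed

lemma atomless_equipartition:
  fixes n :: nat
  assumes at: "atomless M" and A: "A \<in> fmeasurable M" and n: "0 < n"
  shows "\<exists>P. disjoint_family_on P {..<n} \<and> (\<Union>i<n. P i) = A \<and>
    (\<forall>i<n. P i \<in> sets M \<and> measure M (P i) = measure M A / n)"
proof -
  define r where "r i = (if i < n then measure M A / n else 0)" for i
  have sum_r: "(\<Sum>j<k. r j) = real (min k n) * (measure M A / n)" for k
    by (subst sum.mono_neutral_cong_right[of "{..<k}" "{..<min k n}" _ "\<lambda>_. measure M A / n"])
      (auto simp: r_def)
  have r_nonneg: "0 \<le> r i" for i
    by (simp add: r_def)
  have sum_r_le: "(\<Sum>j<k. r j) \<le> measure M A" for k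
  proof -
    have "real (min k n) * (measure M A / n) \<le> real n * (measure M A / n)"
      by (intro mult_right_mono) auto
    then show ?thesis
      using n by (simp add: sum_r)
  qed
  obtain R where R: "R 0 = A" "decseq R" "\<And>k. R k \<in> sets M"
    "\<And>k. measure M (R k) = measure M A - (\<Sum>j<k. r j)"
    using atomless_decreasing_chain[OF at A r_nonneg sum_r_le] by blast
  define P where "P i = (if Suc i < n then R i - R (Suc i) else R i)" for i
  have "disjoint_family_on P {..<n}" "(\<Union>i<n. P i) = A"
    using decseq_truncated_partition[OF R(2) n] R(1) by (simp_all add: P_def[abs_def])
  moreover have "measure M (P i) = measure M A / n" if "i < n" for i
  proof -
    have fin: "R i \<in> fmeasurable M"
      using R fmeasurableI2[OF A _ R(3)] by (auto simp: decseq_def)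
    show ?thesis
    proof (cases "Suc i < n")
      case True
      then show ?thesis
        using fin R(2,3,4) n
        by (simp add: P_def measurable_measure_Diff decseq_Suc_iff sum_r r_def) (simp add: field_simps)
    next
      case False
      then have "i = n - 1"
        using that by linarith
      then show ?thesis
        using n R(4)[of i] by (simp add: P_def sum_r of_nat_diff field_simps)
    qed
  qed
  moreover have "P i \<in> sets M" for i
    using R(3) by (simp add: P_def)
  ultimately show ?thesis
    by blast
qed

section \<open>The grand Lebesgue quasi-norm\<close>

lemma Lp_qnorm_le_iff:
  assumes p: "0 < p" and r: "0 \<le> r"
  shows "Lp_qnorm M p f \<le> ennreal r \<longleftrightarrow> (\<integral>\<^sup>+x. ennreal (\<bar>f x\<bar> powr p) \<partial>M) \<le> ennreal (r powr p)"
proof (cases "\<integral>\<^sup>+x. ennreal (\<bar>f x\<bar> powr p) \<partial>M")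
  case (real i)
  have "i powr (1 / p) \<le> r \<longleftrightarrow> i \<le> r powr p"
  proof
    assume "i powr (1 / p) \<le> r"
    then have "(i powr (1 / p)) powr p \<le> r powr p"
      using p real by (intro powr_mono2) auto
    then show "i \<le> r powr p"
      using p real by (simp add: powr_powr)
  next
    assume "i \<le> r powr p"
    then have "i powr (1 / p) \<le> (r powr p) powr (1 / p)"
      using p real by (intro powr_mono2) auto
    then show "i powr (1 / p) \<le> r"
      using p r by (simp add: powr_powr)
  qed
  then show ?thesis
    using real r by (simp add: Lp_qnorm_def)
next
  case top
  then show ?thesis
    by (simp add: Lp_qnorm_def top_unique)
qed

lemma G_qnorm_le_iff:
  assumes a: "0 < a" and psi: "\<forall>p\<in>{a<..<b}. 0 < \<psi> p" and R: "0 \<le> R"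
  shows "G_qnorm M \<psi> a b f \<le> ennreal R \<longleftrightarrow>
    (\<forall>p\<in>{a<..<b}. (\<integral>\<^sup>+x. ennreal (\<bar>f x\<bar> powr p) \<partial>M) \<le> ennreal ((R * \<psi> p) powr p))"
proof -
  have "Lp_qnorm M p f / ennreal (\<psi> p) \<le> ennreal R \<longleftrightarrow>
      (\<integral>\<^sup>+x. ennreal (\<bar>f x\<bar> powr p) \<partial>M) \<le> ennreal ((R * \<psi> p) powr p)"
    if p: "p \<in> {a<..<b}" for p
  proof -
    have psi_p: "0 < \<psi> p"
      using psi p by blast
    have "Lp_qnorm M p f / ennreal (\<psi> p) \<le> ennreal R \<longleftrightarrow> Lp_qnorm M p f \<le> ennreal (R * \<psi> p)"
      using psi_p R by (cases "Lp_qnorm M p f") (auto simp: divide_ennreal ennreal_top_divide pos_divide_le_eq top_unique)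
    also have "\<dots> \<longleftrightarrow> (\<integral>\<^sup>+x. ennreal (\<bar>f x\<bar> powr p) \<partial>M) \<le> ennreal ((R * \<psi> p) powr p)"
      using p a psi_p R by (intro Lp_qnorm_le_iff) auto
    finally show ?thesis .
  qed
  then show ?thesis
    unfolding G_qnorm_def SUP_le_iff by blast
qed

lemma G_space_nn_integral_powr_finite:
  assumes a: "0 < a" and psi: "\<forall>p\<in>{a<..<b}. 0 < \<psi> p"
    and f: "f \<in> G_space M \<psi> a b" and p: "p \<in> {a<..<b}"
  shows "(\<integral>\<^sup>+x. ennreal (\<bar>f x\<bar> powr p) \<partial>M) < \<infinity>"
proof -
  obtain R where "0 \<le> R" "G_qnorm M \<psi> a b f = ennreal R"
    using f by (auto simp: G_space_def less_top_ennreal)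
  then have "(\<integral>\<^sup>+x. ennreal (\<bar>f x\<bar> powr p) \<partial>M) \<le> ennreal ((R * \<psi> p) powr p)"
    using G_qnorm_le_iff[OF a psi, of R M f] p by simp
  then show ?thesis
    by (simp add: le_less_trans)
qed

lemma G_space_dominated:
  assumes a: "0 < a" and psi: "\<forall>p\<in>{a<..<b}. 0 < \<psi> p"
    and f: "f \<in> G_space M \<psi> a b" and g: "g \<in> borel_measurable M"
    and le: "\<And>x. x \<in> space M \<Longrightarrow> \<bar>g x\<bar> \<le> \<bar>f x\<bar>"
  shows "g \<in> G_space M \<psi> a b"
proof -
  obtain R where R: "G_qnorm M \<psi> a b f = ennreal R" "0 \<le> R"
    using f by (auto simp: G_space_def less_top_ennreal)
  then have "G_qnorm M \<psi> a b f \<le> ennreal R"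
    by simp
  then have f_bound: "\<forall>p\<in>{a<..<b}. (\<integral>\<^sup>+x. ennreal (\<bar>f x\<bar> powr p) \<partial>M) \<le> ennreal ((R * \<psi> p) powr p)"
    using G_qnorm_le_iff[OF a psi R(2)] by blast
  have "(\<integral>\<^sup>+x. ennreal (\<bar>g x\<bar> powr p) \<partial>M) \<le> ennreal ((R * \<psi> p) powr p)"
    if p: "p \<in> {a<..<b}" for p
  proof -
    have "(\<integral>\<^sup>+x. ennreal (\<bar>g x\<bar> powr p) \<partial>M) \<le> (\<integral>\<^sup>+x. ennreal (\<bar>f x\<bar> powr p) \<partial>M)"
      using le p a by (intro nn_integral_mono ennreal_leI powr_mono2) auto
    then show ?thesis
      using f_bound p by (blast intro: order_trans)
  qed
  then have "G_qnorm M \<psi> a b g \<le> ennreal R"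
    using G_qnorm_le_iff[OF a psi R(2)] by blast
  then show ?thesis
    using g by (simp add: G_space_def le_less_trans)
qed

lemma G_space_mult_indicator:
  assumes "0 < a" "\<forall>p\<in>{a<..<b}. 0 < \<psi> p" "f \<in> G_space M \<psi> a b" "S \<in> sets M"
  shows "(\<lambda>x. f x * indicator S x) \<in> G_space M \<psi> a b"
proof (rule G_space_dominated[OF assms(1-3)])
  have "f \<in> borel_measurable M"
    using assms(3) by (simp add: G_space_def)
  then show "(\<lambda>x. f x * indicator S x) \<in> borel_measurable M"
    using assms(4) by measurable
  show "\<bar>f x * indicator S x\<bar> \<le> \<bar>f x\<bar>" for x
    by (simp add: indicator_def)
qed

lemma G_space_of_uniform_bound:
  assumes a: "0 < a" and psi: "\<forall>p\<in>{a<..<b}. 0 < \<psi> p"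
    and m: "0 < m" "\<forall>p\<in>{a<..<b}. m \<le> \<psi> p" and f: "f \<in> borel_measurable M"
    and V: "\<forall>p\<in>{a<..<b}. (\<integral>\<^sup>+x. ennreal (\<bar>f x\<bar> powr p) \<partial>M) \<le> ennreal V"
  shows "f \<in> G_space M \<psi> a b"
proof -
  define r where "r = max 1 V powr (1 / a)"
  have "(\<integral>\<^sup>+x. ennreal (\<bar>f x\<bar> powr p) \<partial>M) \<le> ennreal ((r / m * \<psi> p) powr p)"
    if p: "p \<in> {a<..<b}" for p
  proof -
    have "V \<le> max 1 V powr 1"
      by simp
    also have "\<dots> \<le> max 1 V powr (p / a)"
      using p a by (intro powr_mono) auto
    also have "\<dots> = r powr p"
      by (simp add: r_def powr_powr)
    also have "\<dots> \<le> (r / m * \<psi> p) powr p"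
    proof -
      have "r * 1 \<le> r * (\<psi> p / m)"
        using m p by (intro mult_left_mono) (auto simp: r_def)
      then show ?thesis
        using p a by (intro powr_mono2) (auto simp: r_def)
    qed
    finally show ?thesis
      using V p by (meson ennreal_leI order_trans)
  qed
  moreover have "0 \<le> r / m"
    using m by (simp add: r_def)
  ultimately have "G_qnorm M \<psi> a b f \<le> ennreal (r / m)"
    using G_qnorm_le_iff[OF a psi] by blast
  then show ?thesis
    using f by (auto simp: G_space_def intro: le_less_trans)
qed

lemma G_dual_AE_cong:
  "L \<in> G_dual M \<psi> a b \<Longrightarrow> f \<in> G_space M \<psi> a b \<Longrightarrow> g \<in> G_space M \<psi> a b \<Longrightarrow>
    (AE x in M. f x = g x) \<Longrightarrow> L f = L g"
  unfolding G_dual_def by blast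

lemma G_dual_add:
  "L \<in> G_dual M \<psi> a b \<Longrightarrow> f \<in> G_space M \<psi> a b \<Longrightarrow> g \<in> G_space M \<psi> a b \<Longrightarrow>
    L (\<lambda>x. f x + g x) = L f + L g"
  unfolding G_dual_def by blast

lemma G_dual_scale:
  "L \<in> G_dual M \<psi> a b \<Longrightarrow> f \<in> G_space M \<psi> a b \<Longrightarrow> L (\<lambda>x. c * f x) = c * L f"
  unfolding G_dual_def by blast

lemma G_dual_continuous:
  "L \<in> G_dual M \<psi> a b \<Longrightarrow> f \<in> G_space M \<psi> a b \<Longrightarrow> 0 < \<epsilon> \<Longrightarrow>
    \<exists>\<delta>>0. \<forall>g\<in>G_space M \<psi> a b. G_qnorm M \<psi> a b (\<lambda>x. g x - f x) < ennreal \<delta> \<longrightarrow> \<bar>L g - L f\<bar> < \<epsilon>"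
  unfolding G_dual_def by blast

lemma G_dual_sum_indicator:
  fixes A :: "nat \<Rightarrow> 'a set"
  assumes a: "0 < a" and psi: "\<forall>p\<in>{a<..<b}. 0 < \<psi> p"
    and L: "L \<in> G_dual M \<psi> a b" and f: "f \<in> G_space M \<psi> a b"
    and A: "\<And>i. i < n \<Longrightarrow> A i \<in> sets M" and disj: "disjoint_family_on A {..<n}"
  shows "L (\<lambda>x. f x * indicator (\<Union>i<n. A i) x) = (\<Sum>i<n. L (\<lambda>x. f x * indicator (A i) x))"
  using A disj
proof (induction n)
  case 0
  have "L (\<lambda>x. 0 * f x) = 0 * L f"
    using L f by (rule G_dual_scale)
  then show ?case
    by simp
next
  case (Suc n)
  have "\<And>i. i < n \<Longrightarrow> A i \<in> sets M" "disjoint_family_on A {..<n}"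
    using Suc.prems by (auto intro: disjoint_family_on_mono[rotated])
  note IH = Suc.IH[OF this]
  have "A n \<inter> A i = {}" if "i < n" for i
    using disjoint_family_onD[OF Suc.prems(2)] that by simp
  then have "A n \<inter> (\<Union>i<n. A i) = {}"
    by blast
  then have split: "(\<lambda>x. f x * indicator (\<Union>i<Suc n. A i) x) =
      (\<lambda>x. f x * indicator (\<Union>i<n. A i) x + f x * indicator (A n) x)"
    by (auto simp: lessThan_Suc indicator_def fun_eq_iff)
  have "(\<lambda>x. f x * indicator (\<Union>i<n. A i) x) \<in> G_space M \<psi> a b"
    "(\<lambda>x. f x * indicator (A n) x) \<in> G_space M \<psi> a b"
    using Suc.prems(1) by (auto intro!: G_space_mult_indicator[OF a psi f])
  then show ?case
    using IH G_dual_add[OF L] by (simp add: split)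
qed

section \<open>The dual space is trivial\<close>

lemma powr_floor_log_le:
  fixes y p :: real
  assumes y: "0 < y" and p: "0 \<le> p"
  shows "2 powr (real_of_int \<lfloor>log 2 y\<rfloor> * p) \<le> y powr p"
proof -
  have "2 powr real_of_int \<lfloor>log 2 y\<rfloor> \<le> 2 powr log 2 y"
    by (intro powr_mono) auto
  then have "(2 powr real_of_int \<lfloor>log 2 y\<rfloor>) powr p \<le> y powr p"
    using y p by (intro powr_mono2) auto
  then show ?thesis
    by (simp add: powr_powr)
qed

lemma powr_le_floor_log:
  fixes y p :: real
  assumes y: "0 < y" and p: "0 \<le> p" "p \<le> 1"
  shows "y powr p \<le> 2 * 2 powr (real_of_int \<lfloor>log 2 y\<rfloor> * p)"
proof -
  define k where "k = real_of_int \<lfloor>log 2 y\<rfloor>"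
  have "2 powr log 2 y \<le> 2 powr (k + 1)"
    unfolding k_def by (intro powr_mono) linarith+
  then have "y powr p \<le> (2 powr (k + 1)) powr p"
    using y p by (intro powr_mono2) auto
  also have "\<dots> = 2 powr p * 2 powr (k * p)"
    by (simp add: powr_powr powr_add[symmetric] algebra_simps)
  also have "\<dots> \<le> 2 * 2 powr (k * p)"
    using p powr_mono[of p 1 2] by (intro mult_right_mono) auto
  finally show ?thesis
    unfolding k_def .
qed

lemma fmeasurable_abs_ge:
  fixes f :: "'a \<Rightarrow> real"
  assumes f: "f \<in> borel_measurable M" and c: "0 < c" and p: "0 < p"
    and fin: "(\<integral>\<^sup>+x. ennreal (\<bar>f x\<bar> powr p) \<partial>M) < \<infinity>"
  shows "{x\<in>space M. c \<le> \<bar>f x\<bar>} \<in> fmeasurable M"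
proof -
  let ?S = "{x\<in>space M. c \<le> \<bar>f x\<bar>}"
  have S: "?S \<in> sets M"
    using f by measurable
  have "ennreal (c powr p) * emeasure M ?S = (\<integral>\<^sup>+x. ennreal (c powr p) * indicator ?S x \<partial>M)"
    using S by (simp add: nn_integral_cmult_indicator)
  also have "\<dots> \<le> (\<integral>\<^sup>+x. ennreal (\<bar>f x\<bar> powr p) \<partial>M)"
    using c p by (intro nn_integral_mono) (auto simp: indicator_def intro!: ennreal_leI powr_mono2)
  finally have "ennreal (c powr p) * emeasure M ?S < \<infinity>"
    using fin by (rule le_less_trans)
  then show ?thesis
    using S c by (auto simp: fmeasurable_def ennreal_mult_less_top)
qed

lemma nn_integral_comp_countable_indicator:
  fixes k :: "'a \<Rightarrow> 'b::countable"
  assumes k: "k \<in> M \<rightarrow>\<^sub>M count_space UNIV" and A: "A \<in> sets M"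
  shows "(\<integral>\<^sup>+x. w (k x) * indicator A x \<partial>M) =
    (\<integral>\<^sup>+j. w j * emeasure M (A \<inter> k -` {j}) \<partial>count_space UNIV)"
proof -
  have level: "A \<inter> k -` {j} \<in> sets M" for j
  proof -
    have "A \<inter> k -` {j} = A \<inter> (k -` {j} \<inter> space M)"
      using sets.sets_into_space[OF A] by blast
    then show ?thesis
      using measurable_sets[OF k, of "{j}"] A by auto
  qed
  have "(\<integral>\<^sup>+x. w (k x) * indicator A x \<partial>M) =
      (\<integral>\<^sup>+x. \<integral>\<^sup>+j. w j * indicator (A \<inter> k -` {j}) x \<partial>count_space UNIV \<partial>M)"
  proof (rule nn_integral_cong)
    fix x
    have "(\<integral>\<^sup>+j. w j * indicator (A \<inter> k -` {j}) x \<partial>count_space UNIV) =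
        (\<integral>\<^sup>+j. (w j * indicator A x) * indicator {k x} j \<partial>count_space UNIV)"
      by (intro nn_integral_cong) (auto simp: indicator_def)
    then show "w (k x) * indicator A x =
        (\<integral>\<^sup>+j. w j * indicator (A \<inter> k -` {j}) x \<partial>count_space UNIV)"
      by simp
  qed
  also have "\<dots> = (\<integral>\<^sup>+j. \<integral>\<^sup>+x. w j * indicator (A \<inter> k -` {j}) x \<partial>M \<partial>count_space UNIV)"
    using level by (intro nn_integral_count_space_nn_integral) auto
  also have "\<dots> = (\<integral>\<^sup>+j. w j * emeasure M (A \<inter> k -` {j}) \<partial>count_space UNIV)"
    using level by (simp add: nn_integral_cmult_indicator)
  finally show ?thesis .
qed

lemma atomless_split_level_sets:
  fixes k :: "'a \<Rightarrow> 'b::countable" and n :: nat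
  assumes at: "atomless M" and k: "k \<in> M \<rightarrow>\<^sub>M count_space UNIV"
    and fin: "\<And>j. Z \<inter> k -` {j} \<in> fmeasurable M" and n: "0 < n"
  shows "\<exists>A. disjoint_family_on A {..<n} \<and> (\<Union>i<n. A i) = Z \<and>
    (\<forall>i<n. A i \<in> sets M \<and> (\<forall>j. emeasure M (A i \<inter> k -` {j}) = ennreal (1 / n) * emeasure M (Z \<inter> k -` {j})))"
proof -
  have "\<forall>j. \<exists>P. disjoint_family_on P {..<n} \<and> (\<Union>i<n. P i) = Z \<inter> k -` {j} \<and>
      (\<forall>i<n. P i \<in> sets M \<and> measure M (P i) = measure M (Z \<inter> k -` {j}) / n)"
    using atomless_equipartition[OF at fin n] by blast
  then obtain P where P: "\<And>j. disjoint_family_on (P j) {..<n}" "\<And>j. (\<Union>i<n. P j i) = Z \<inter> k -` {j}"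
    "\<And>i j. i < n \<Longrightarrow> P j i \<in> sets M" "\<And>i j. i < n \<Longrightarrow> measure M (P j i) = measure M (Z \<inter> k -` {j}) / n"
    by metis
  have P_level: "P j i \<subseteq> Z \<inter> k -` {j}" if "i < n" for i j
    using P(2)[of j] that by blast
  define A where "A i = (\<Union>j. P j i)" for i
  have A_level: "A i \<inter> k -` {j} = P j i" if "i < n" for i j
  proof
    show "A i \<inter> k -` {j} \<subseteq> P j i"
      using P_level[OF that] by (auto simp: A_def)
    show "P j i \<subseteq> A i \<inter> k -` {j}"
      using P_level[OF that, of j] by (auto simp: A_def)
  qed
  have "disjoint_family_on A {..<n}"
    unfolding disjoint_family_on_def
  proof (intro ballI impI)
    fix i i' assume i: "i \<in> {..<n}" "i' \<in> {..<n}" "i \<noteq> i'"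
    show "A i \<inter> A i' = {}"
    proof (rule ccontr)
      assume "A i \<inter> A i' \<noteq> {}"
      then obtain x j j' where "x \<in> P j i" "x \<in> P j' i'"
        by (auto simp: A_def)
      moreover from this have "k x = j" "k x = j'"
        using P_level[of i j] P_level[of i' j'] i by auto
      ultimately show False
        using disjoint_family_onD[OF P(1) i, of j] by auto
    qed
  qed
  moreover have "(\<Union>i<n. A i) = (\<Union>j. \<Union>i<n. P j i)"
    by (auto simp: A_def)
  then have "(\<Union>i<n. A i) = Z"
    using P(2) by auto
  moreover have "A i \<in> sets M" if "i < n" for i
    using P(3)[OF that] by (auto simp: A_def intro: sets.countable_UN')
  moreover have "emeasure M (A i \<inter> k -` {j}) = ennreal (1 / n) * emeasure M (Z \<inter> k -` {j})"
    if "i < n" for i j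
  proof -
    have "P j i \<in> fmeasurable M"
      using fmeasurableI2[OF fin P_level[OF that] P(3)[OF that]] .
    then show ?thesis
      using that fin[of j] P(4)[OF that]
      by (simp add: A_level emeasure_eq_measure2 ennreal_mult'[symmetric])
  qed
  ultimately show ?thesis
    by blast
qed

lemma nn_integral_powr_dyadic_levels_scaled:
  fixes M :: "'a measure" and f :: "'a \<Rightarrow> real" and c :: ennreal
  defines "k \<equiv> \<lambda>x. \<lfloor>log 2 \<bar>f x\<bar>\<rfloor>" and "Z \<equiv> {x\<in>space M. f x \<noteq> 0}"
  assumes f[measurable]: "f \<in> borel_measurable M" and A: "A \<in> sets M" "A \<subseteq> Z"
    and scaled: "\<And>j. emeasure M (A \<inter> k -` {j}) = c * emeasure M (Z \<inter> k -` {j})"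
    and p: "0 < p" "p \<le> 1"
  shows "(\<integral>\<^sup>+x. ennreal (\<bar>f x * indicator A x\<bar> powr p) \<partial>M) \<le> 2 * c * (\<integral>\<^sup>+x. ennreal (\<bar>f x\<bar> powr p) \<partial>M)"
proof -
  \<comment> \<open>on each dyadic level set \<open>k -` {j}\<close> the function \<open>\<bar>f\<bar> powr p\<close> lies between \<open>w j\<close> and \<open>2 * w j\<close>\<close>
  define w where "w j = ennreal (2 powr (real_of_int j * p))" for j
  have k[measurable]: "k \<in> M \<rightarrow>\<^sub>M count_space UNIV"
    unfolding k_def by measurable
  have Z[measurable]: "Z \<in> sets M"
    unfolding Z_def by measurable
  have "(\<integral>\<^sup>+x. ennreal (\<bar>f x * indicator A x\<bar> powr p) \<partial>M) \<le> (\<integral>\<^sup>+x. 2 * (w (k x) * indicator A x) \<partial>M)"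
  proof (rule nn_integral_mono)
    fix x
    have "x \<in> A \<Longrightarrow> \<bar>f x\<bar> powr p \<le> 2 * 2 powr (real_of_int (k x) * p)"
      using A(2) p powr_le_floor_log[of "\<bar>f x\<bar>" p] by (auto simp: Z_def k_def)
    then have "x \<in> A \<Longrightarrow> ennreal (\<bar>f x\<bar> powr p) \<le> 2 * w (k x)"
      unfolding w_def by (metis ennreal_leI ennreal_mult' ennreal_numeral zero_le_numeral)
    then show "ennreal (\<bar>f x * indicator A x\<bar> powr p) \<le> 2 * (w (k x) * indicator A x)"
      by (auto simp: indicator_def)
  qed
  also have "\<dots> = 2 * (\<integral>\<^sup>+j. w j * emeasure M (A \<inter> k -` {j}) \<partial>count_space UNIV)"
    using A(1) by (simp add: nn_integral_cmult nn_integral_comp_countable_indicator)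
  also have "\<dots> = 2 * c * (\<integral>\<^sup>+j. w j * emeasure M (Z \<inter> k -` {j}) \<partial>count_space UNIV)"
    by (simp add: scaled nn_integral_cmult[symmetric] mult.left_commute mult.assoc)
  also have "(\<integral>\<^sup>+j. w j * emeasure M (Z \<inter> k -` {j}) \<partial>count_space UNIV) = (\<integral>\<^sup>+x. w (k x) * indicator Z x \<partial>M)"
    by (simp add: nn_integral_comp_countable_indicator)
  also have "\<dots> \<le> (\<integral>\<^sup>+x. ennreal (\<bar>f x\<bar> powr p) \<partial>M)"
  proof (rule nn_integral_mono)
    fix x
    have "x \<in> Z \<Longrightarrow> 2 powr (real_of_int (k x) * p) \<le> \<bar>f x\<bar> powr p"
      using powr_floor_log_le[of "\<bar>f x\<bar>" p] p by (simp add: k_def Z_def)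
    then show "w (k x) * indicator Z x \<le> ennreal (\<bar>f x\<bar> powr p)"
      by (auto simp: w_def indicator_def intro: ennreal_leI)
  qed
  finally show ?thesis
    by (simp add: mult_left_mono)
qed

lemma atomless_split_powr_integrals:
  fixes f :: "'a \<Rightarrow> real" and n :: nat
  assumes at: "atomless M" and f[measurable]: "f \<in> borel_measurable M"
    and p0: "0 < p0" and fin: "(\<integral>\<^sup>+x. ennreal (\<bar>f x\<bar> powr p0) \<partial>M) < \<infinity>" and n: "0 < n"
  shows "\<exists>A. disjoint_family_on A {..<n} \<and> (\<Union>i<n. A i) = {x\<in>space M. f x \<noteq> 0} \<and>
    (\<forall>i<n. A i \<in> sets M \<and> (\<forall>p\<in>{0<..1}. (\<integral>\<^sup>+x. ennreal (\<bar>f x * indicator (A i) x\<bar> powr p) \<partial>M)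
        \<le> ennreal (2 / n) * (\<integral>\<^sup>+x. ennreal (\<bar>f x\<bar> powr p) \<partial>M)))"
proof -
  define k where "k = (\<lambda>x. \<lfloor>log 2 \<bar>f x\<bar>\<rfloor>)"
  have k[measurable]: "k \<in> M \<rightarrow>\<^sub>M count_space UNIV"
    unfolding k_def by measurable
  define Z where "Z = {x\<in>space M. f x \<noteq> 0}"
  have level_fin: "Z \<inter> k -` {j} \<in> fmeasurable M" for j
  proof -
    have "{x\<in>space M. 2 powr real_of_int j \<le> \<bar>f x\<bar>} \<in> fmeasurable M"
      using fmeasurable_abs_ge[OF f _ p0 fin] by simp
    moreover have "Z \<inter> k -` {j} \<subseteq> {x\<in>space M. 2 powr real_of_int j \<le> \<bar>f x\<bar>}"
      using powr_floor_log_le[of _ 1] by (auto simp: Z_def k_def)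
    moreover have "Z \<inter> k -` {j} = {x\<in>space M. f x \<noteq> 0 \<and> k x = j}"
      by (auto simp: Z_def)
    then have "Z \<inter> k -` {j} \<in> sets M"
      by simp
    ultimately show ?thesis
      by (rule fmeasurableI2)
  qed
  obtain A where A: "disjoint_family_on A {..<n}" "(\<Union>i<n. A i) = Z"
    "\<And>i. i < n \<Longrightarrow> A i \<in> sets M"
    "\<And>i j. i < n \<Longrightarrow> emeasure M (A i \<inter> k -` {j}) = ennreal (1 / n) * emeasure M (Z \<inter> k -` {j})"
    using atomless_split_level_sets[OF at k level_fin n] by blast
  have "(\<integral>\<^sup>+x. ennreal (\<bar>f x * indicator (A i) x\<bar> powr p) \<partial>M)
      \<le> ennreal (2 / n) * (\<integral>\<^sup>+x. ennreal (\<bar>f x\<bar> powr p) \<partial>M)"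
    if i: "i < n" and p: "0 < p" "p \<le> 1" for i p
  proof -
    have "2 * ennreal (1 / n) = ennreal (2 / n)"
      by (simp add: ennreal_mult'[symmetric] ennreal_numeral[symmetric] del: ennreal_numeral)
    moreover have "A i \<subseteq> Z"
      using A(2) i by blast
    ultimately show ?thesis
      using nn_integral_powr_dyadic_levels_scaled[OF f A(3)[OF i] _ A(4)[OF i, unfolded k_def Z_def] p]
      by (simp add: Z_def)
  qed
  then show ?thesis
    using A unfolding Z_def by auto
qed

lemma powr_amplification_le:
  fixes n :: nat
  assumes n: "0 < n" and p: "0 < a" "a < p" "p < b"
  shows "real n powr p * (2 / n) \<le> (n powr (1 - 1 / b) * 2 powr (1 / a)) powr p"
proof -
  have "(n powr (1 - 1 / p) * 2 powr (1 / p)) powr p = n powr ((1 - 1 / p) * p) * 2 powr (1 / p * p)"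
    by (simp add: powr_mult powr_powr)
  also have "(1 - 1 / p) * p = p - 1"
    using p by (simp add: field_simps)
  also have "n powr (p - 1) = n powr p / n"
    using n by (simp add: powr_diff)
  finally have "real n powr p * (2 / n) = (n powr (1 - 1 / p) * 2 powr (1 / p)) powr p"
    using p by simp
  also have "\<dots> \<le> (n powr (1 - 1 / b) * 2 powr (1 / a)) powr p"
  proof (intro powr_mono2 mult_mono)
    have "1 / b \<le> 1 / p"
      using p by (intro divide_left_mono) auto
    then show "n powr (1 - 1 / p) \<le> n powr (1 - 1 / b)"
      using n by (intro powr_mono) auto
    show "2 powr (1 / p) \<le> 2 powr (1 / a)"
      using p by (intro powr_mono) (auto simp: divide_simps)
  qed (use p in auto)
  finally show ?thesis .
qed

lemma G_qnorm_amplified_piece_le: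
  fixes n :: nat and f g :: "'a \<Rightarrow> real"
  assumes g: "g \<in> borel_measurable M" and a: "0 < a" and b: "a < b" and psi: "\<forall>p\<in>{a<..<b}. 0 < \<psi> p"
    and R: "0 \<le> R" "G_qnorm M \<psi> a b f \<le> ennreal R" and n: "0 < n"
    and piece: "\<forall>p\<in>{a<..<b}. (\<integral>\<^sup>+x. ennreal (\<bar>g x\<bar> powr p) \<partial>M)
      \<le> ennreal (2 / n) * (\<integral>\<^sup>+x. ennreal (\<bar>f x\<bar> powr p) \<partial>M)"
  shows "G_qnorm M \<psi> a b (\<lambda>x. n * g x) \<le> ennreal (n powr (1 - 1 / b) * 2 powr (1 / a) * R)"
proof -
  define F where "F = n powr (1 - 1 / b) * 2 powr (1 / a)"
  have f_bound: "\<forall>p\<in>{a<..<b}. (\<integral>\<^sup>+x. ennreal (\<bar>f x\<bar> powr p) \<partial>M) \<le> ennreal ((R * \<psi> p) powr p)"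
    using G_qnorm_le_iff[OF a psi R(1)] R(2) by blast
  have "(\<integral>\<^sup>+x. ennreal (\<bar>n * g x\<bar> powr p) \<partial>M) \<le> ennreal ((F * R * \<psi> p) powr p)"
    if p: "p \<in> {a<..<b}" for p
  proof -
    have psi_p: "0 < \<psi> p"
      using psi p by blast
    have "(\<integral>\<^sup>+x. ennreal (\<bar>n * g x\<bar> powr p) \<partial>M) = ennreal (n powr p) * (\<integral>\<^sup>+x. ennreal (\<bar>g x\<bar> powr p) \<partial>M)"
      using g by (subst nn_integral_cmult[symmetric]) (auto simp: abs_mult powr_mult ennreal_mult)
    also have "\<dots> \<le> ennreal (n powr p) * (ennreal (2 / n) * ennreal ((R * \<psi> p) powr p))"
    proof (intro mult_left_mono)
      have "ennreal (2 / n) * (\<integral>\<^sup>+x. ennreal (\<bar>f x\<bar> powr p) \<partial>M) \<le> ennreal (2 / n) * ennreal ((R * \<psi> p) powr p)"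
        using f_bound p by (intro mult_left_mono) auto
      then show "(\<integral>\<^sup>+x. ennreal (\<bar>g x\<bar> powr p) \<partial>M) \<le> ennreal (2 / n) * ennreal ((R * \<psi> p) powr p)"
        using piece p by (blast intro: order_trans)
    qed simp
    also have "\<dots> = ennreal (real n powr p * (2 / n) * (R * \<psi> p) powr p)"
      by (simp only: ennreal_mult[symmetric] mult.assoc powr_ge_zero divide_nonneg_nonneg
          zero_le_numeral of_nat_0_le_iff mult_nonneg_nonneg)
    also have "\<dots> \<le> ennreal (F powr p * (R * \<psi> p) powr p)"
      using p unfolding F_def
      by (intro ennreal_leI mult_right_mono powr_amplification_le[OF n a]) auto
    also have "\<dots> = ennreal ((F * R * \<psi> p) powr p)"
      using R psi_p by (simp add: F_def powr_mult mult.assoc)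
    finally show ?thesis .
  qed
  moreover have "0 \<le> F * R"
    using R by (simp add: F_def)
  ultimately show ?thesis
    using G_qnorm_le_iff[OF a psi, of "F * R" M "\<lambda>x. n * g x"] by (simp add: F_def)
qed

lemma G_dual_eq_sum_amplified:
  fixes n :: nat and f :: "'a \<Rightarrow> real"
  assumes a: "0 < a" and psi: "\<forall>p\<in>{a<..<b}. 0 < \<psi> p"
    and L: "L \<in> G_dual M \<psi> a b" and f: "f \<in> G_space M \<psi> a b" and n: "0 < n"
    and A: "\<And>i. i < n \<Longrightarrow> A i \<in> sets M" "disjoint_family_on A {..<n}"
    and cover: "{x\<in>space M. f x \<noteq> 0} \<subseteq> (\<Union>i<n. A i)"
  shows "L f = (\<Sum>i<n. L (\<lambda>x. n * (f x * indicator (A i) x))) / n"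
proof -
  have "(\<Union>i<n. A i) \<in> sets M"
    using A(1) by auto
  then have "L f = L (\<lambda>x. f x * indicator (\<Union>i<n. A i) x)"
    using cover by (intro G_dual_AE_cong[OF L f G_space_mult_indicator[OF a psi f]] AE_I2)
      (auto simp: indicator_def)
  also have "\<dots> = (\<Sum>i<n. L (\<lambda>x. f x * indicator (A i) x))"
    using A by (rule G_dual_sum_indicator[OF a psi L f])
  also have "\<dots> = (\<Sum>i<n. L (\<lambda>x. n * (f x * indicator (A i) x)) / n)"
    using n A(1) by (intro sum.cong) (auto simp: G_dual_scale[OF L G_space_mult_indicator[OF a psi f]])
  finally show ?thesis
    by (simp add: sum_divide_distrib)
qed

lemma exists_nat_powr_mult_less:
  fixes e C \<delta> :: real
  assumes e: "e < 0" and \<delta>: "0 < \<delta>"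
  shows "\<exists>n::nat. 0 < n \<and> real n powr e * C < \<delta>"
proof -
  have "((\<lambda>n. real n powr e) \<longlongrightarrow> 0) sequentially"
    using e by (intro tendsto_neg_powr filterlim_real_sequentially) auto
  then have "((\<lambda>n. real n powr e * C) \<longlongrightarrow> 0) sequentially"
    by (rule tendsto_mult_left_zero)
  then have "eventually (\<lambda>n. real n powr e * C < \<delta>) sequentially"
    using \<delta> by (rule order_tendstoD)
  then obtain N where N: "\<And>n. N \<le> n \<Longrightarrow> real n powr e * C < \<delta>"
    unfolding eventually_sequentially by blast
  have "real (Suc N) powr e * C < \<delta>"
    by (rule N) simp
  then show ?thesis
    by (intro exI[of _ "Suc N"]) simp
qed

lemma G_dual_eq_zero:
  assumes at: "atomless M" and a: "0 < a" and b: "a < b" "b < 1" and psi: "\<forall>p\<in>{a<..<b}. 0 < \<psi> p"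
    and L: "L \<in> G_dual M \<psi> a b" and f: "f \<in> G_space M \<psi> a b"
  shows "L f = 0"
proof (rule ccontr)
  assume "L f \<noteq> 0"
  then have eps: "0 < \<bar>L f\<bar>"
    by simp
  have f_meas: "f \<in> borel_measurable M"
    using f by (simp add: G_space_def)
  have "(\<lambda>x. 0 * f x) \<in> G_space M \<psi> a b" "L (\<lambda>x. 0 * f x) = 0"
    using G_space_mult_indicator[OF a psi f sets.empty_sets] G_dual_scale[OF L f, of 0] by simp_all
  then obtain \<delta> where \<delta>: "0 < \<delta>"
    "\<And>g. g \<in> G_space M \<psi> a b \<Longrightarrow> G_qnorm M \<psi> a b g < ennreal \<delta> \<Longrightarrow> \<bar>L g\<bar> < \<bar>L f\<bar>"
    using G_dual_continuous[OF L _ eps, of "\<lambda>x. 0 * f x"] by auto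
  obtain R where "0 \<le> R" "G_qnorm M \<psi> a b f = ennreal R"
    using f by (auto simp: G_space_def less_top_ennreal)
  then have R: "0 \<le> R" "G_qnorm M \<psi> a b f \<le> ennreal R"
    by simp_all
  have "1 - 1 / b < 0"
    using a b by (simp add: field_simps)
  then obtain n :: nat where n: "0 < n" "real n powr (1 - 1 / b) * (2 powr (1 / a) * R) < \<delta>"
    using exists_nat_powr_mult_less \<delta>(1) by blast
  have "(a + b) / 2 \<in> {a<..<b}"
    using b by simp
  then have "(\<integral>\<^sup>+x. ennreal (\<bar>f x\<bar> powr ((a + b) / 2)) \<partial>M) < \<infinity>"
    by (rule G_space_nn_integral_powr_finite[OF a psi f])
  then obtain A where A: "disjoint_family_on A {..<n}" "(\<Union>i<n. A i) = {x\<in>space M. f x \<noteq> 0}"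
    "\<And>i. i < n \<Longrightarrow> A i \<in> sets M"
    "\<And>i p. i < n \<Longrightarrow> p \<in> {0<..1} \<Longrightarrow> (\<integral>\<^sup>+x. ennreal (\<bar>f x * indicator (A i) x\<bar> powr p) \<partial>M)
        \<le> ennreal (2 / n) * (\<integral>\<^sup>+x. ennreal (\<bar>f x\<bar> powr p) \<partial>M)"
    using atomless_split_powr_integrals[OF at f_meas _ _ n(1), of "(a + b) / 2"] a b by auto
  have small: "\<bar>L (\<lambda>x. n * (f x * indicator (A i) x))\<bar> < \<bar>L f\<bar>" if i: "i < n" for i
  proof (rule \<delta>(2))
    have meas: "(\<lambda>x. f x * indicator (A i) x) \<in> borel_measurable M"
      using f_meas A(3)[OF i] by measurable
    have "G_qnorm M \<psi> a b (\<lambda>x. n * (f x * indicator (A i) x)) \<le> ennreal (n powr (1 - 1 / b) * 2 powr (1 / a) * R)"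
      using A(4)[OF i] a b by (intro G_qnorm_amplified_piece_le[OF meas a b(1) psi R n(1)]) auto
    also have "\<dots> < ennreal \<delta>"
      using n(2) \<delta>(1) by (simp add: ennreal_lessI mult.assoc)
    finally show "G_qnorm M \<psi> a b (\<lambda>x. n * (f x * indicator (A i) x)) < ennreal \<delta>" .
    then show "(\<lambda>x. n * (f x * indicator (A i) x)) \<in> G_space M \<psi> a b"
      using meas by (auto simp: G_space_def intro: less_trans)
  qed
  have "\<bar>L f\<bar> \<le> (\<Sum>i<n. \<bar>L (\<lambda>x. n * (f x * indicator (A i) x))\<bar>) / n"
    using G_dual_eq_sum_amplified[OF a psi L f n(1) A(3,1)] A(2)
    by (simp add: sum_abs divide_right_mono)
  also have "\<dots> < (\<Sum>i<n. \<bar>L f\<bar>) / n"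
    using small n by (intro divide_strict_right_mono sum_strict_mono) auto
  also have "\<dots> = \<bar>L f\<bar>"
    using n by simp
  finally show False
    by simp
qed

section \<open>The associate space is trivial\<close>

lemma not_AE_zero_bounded_below:
  fixes g :: "'a \<Rightarrow> real"
  assumes sf: "sigma_finite_measure M" and g[measurable]: "g \<in> borel_measurable M"
    and nonzero: "\<not> (AE x in M. g x = 0)"
  shows "\<exists>c>0. \<exists>X\<in>fmeasurable M. 0 < measure M X \<and> (\<forall>x\<in>X. c \<le> \<bar>g x\<bar>)"
proof -
  obtain K :: "nat \<Rightarrow> 'a set" where K: "range K \<subseteq> sets M" "(\<Union>i. K i) = space M"
    "\<And>i. emeasure M (K i) \<noteq> \<infinity>"
    using sigma_finite_measure.sigma_finite[OF sf] by metis
  define Y where "Y m l = {x\<in>space M. 1 / Suc m \<le> \<bar>g x\<bar>} \<inter> K l" for m l :: nat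
  have Y: "Y m l \<in> fmeasurable M" for m l
  proof (rule fmeasurableI2)
    show "K l \<in> fmeasurable M"
      using K by (auto simp: fmeasurable_def less_top)
    show "Y m l \<subseteq> K l" "Y m l \<in> sets M"
      using K(1) by (auto simp: Y_def)
  qed
  have "\<exists>m l. Y m l \<notin> null_sets M"
  proof (rule ccontr)
    assume "\<not> (\<exists>m l. Y m l \<notin> null_sets M)"
    then have "AE x in M. \<forall>m l. x \<notin> Y m l"
      by (simp add: AE_all_countable AE_not_in)
    then have "AE x in M. g x = 0"
    proof (rule AE_mp[OF _ AE_I2], intro impI)
      fix x
      assume x: "x \<in> space M" and notin: "\<forall>m l. x \<notin> Y m l"
      show "g x = 0"
      proof (rule ccontr)
        assume "g x \<noteq> 0"
        then have "0 < \<bar>g x\<bar>"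
          by simp
        then obtain m :: nat where "inverse (Suc m) < \<bar>g x\<bar>"
          using reals_Archimedean by blast
        moreover obtain l where "x \<in> K l"
          using K(2) x by auto
        ultimately have "x \<in> Y m l"
          using x by (auto simp: Y_def inverse_eq_divide)
        then show False
          using notin by blast
      qed
    qed
    then show False
      using nonzero by blast
  qed
  then obtain m l where "Y m l \<notin> null_sets M"
    by blast
  then have "0 < measure M (Y m l)"
    using Y[of m l] by (simp add: null_sets_def emeasure_eq_measure2 fmeasurableD zero_less_measure_iff)
  then show ?thesis
    using Y[of m l] by (intro exI[of _ "1 / Suc m"]) (auto simp: Y_def)
qed

lemma suminf_mult_indicator_disjoint:
  fixes u :: "nat \<Rightarrow> 'b::{t2_space,topological_comm_monoid_add,semiring_1}"
  assumes "disjoint_family D" "x \<in> D j"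
  shows "(\<Sum>k. u k * indicator (D k) x) = u j"
proof -
  have "(\<Sum>k. u k * indicator (D k) x) = (\<Sum>k\<in>{j}. u k * indicator (D k) x)"
    using assms by (intro suminf_finite) (auto simp: disjoint_family_on_def indicator_def)
  then show ?thesis
    using assms(2) by simp
qed

lemma nn_integral_step_function:
  fixes c :: "nat \<Rightarrow> real" and \<phi> :: "real \<Rightarrow> real"
  assumes D: "disjoint_family D" "\<And>k. D k \<in> sets M" and \<phi>: "\<phi> 0 = 0"
  shows "(\<integral>\<^sup>+x. ennreal (\<phi> (\<Sum>k. c k * indicator (D k) x)) \<partial>M) = (\<Sum>k. ennreal (\<phi> (c k)) * emeasure M (D k))"
proof -
  have "(\<integral>\<^sup>+x. ennreal (\<phi> (\<Sum>k. c k * indicator (D k) x)) \<partial>M) =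
      (\<integral>\<^sup>+x. (\<Sum>k. ennreal (\<phi> (c k)) * indicator (D k) x) \<partial>M)"
  proof (rule nn_integral_cong)
    fix x
    show "ennreal (\<phi> (\<Sum>k. c k * indicator (D k) x)) = (\<Sum>k. ennreal (\<phi> (c k)) * indicator (D k) x)"
    proof (cases "\<exists>j. x \<in> D j")
      case True
      then obtain j where j: "x \<in> D j" ..
      then show ?thesis
        by (simp add: suminf_mult_indicator_disjoint[OF D(1) j])
    next
      case False
      then show ?thesis
        using \<phi> by simp
    qed
  qed
  also have "\<dots> = (\<Sum>k. \<integral>\<^sup>+x. ennreal (\<phi> (c k)) * indicator (D k) x \<partial>M)"
    using D(2) by (intro nn_integral_suminf) auto
  also have "\<dots> = (\<Sum>k. ennreal (\<phi> (c k)) * emeasure M (D k))"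
    using D(2) by (simp add: nn_integral_cmult_indicator)
  finally show ?thesis .
qed

lemma suminf_powr_le_geometric:
  fixes r :: "nat \<Rightarrow> real"
  assumes r: "\<And>k. 0 < r k" "\<And>k. r k \<le> (1 / 2) ^ Suc k" and p: "p \<le> b" and b: "b < 1"
  shows "(\<Sum>k. ennreal (r k powr (1 - p))) \<le> ennreal (\<Sum>k. (2 powr (b - 1)) ^ Suc k)"
proof -
  define q where "q = 2 powr (b - 1)"
  have q: "0 < q" "q < 1"
    using b by (auto simp: q_def powr_less_one)
  have term_le: "r k powr (1 - p) \<le> q ^ Suc k" for k
  proof -
    have "(1 / 2 :: real) ^ Suc k \<le> 1"
      by (rule power_le_one) auto
    then have "r k \<le> 1"
      using r(2)[of k] by linarith
    then have "r k powr (1 - p) \<le> r k powr (1 - b)"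
      using r(1)[of k] p by (intro powr_mono') auto
    also have "\<dots> \<le> ((1 / 2) ^ Suc k) powr (1 - b)"
      using r[of k] b by (intro powr_mono2) auto
    also have "\<dots> = (1 / 2) powr (real (Suc k) * (1 - b))"
      by (subst powr_realpow[symmetric]) (simp_all add: powr_powr)
    also have "\<dots> = 2 powr (- (real (Suc k) * (1 - b)))"
      by (simp add: powr_divide powr_minus_divide)
    also have "\<dots> = 2 powr (real (Suc k) * (b - 1))"
      by (simp add: algebra_simps)
    also have "\<dots> = q ^ Suc k"
      unfolding q_def by (rule powr_power[symmetric]) simp
    finally show ?thesis .
  qed
  have "summable (\<lambda>k. q ^ Suc k)"
    using q by (simp add: summable_geometric)
  then have "(\<Sum>k. ennreal (q ^ Suc k)) = ennreal (\<Sum>k. q ^ Suc k)"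
    using q by (intro suminf_ennreal2) auto
  moreover have "(\<Sum>k. ennreal (r k powr (1 - p))) \<le> (\<Sum>k. ennreal (q ^ Suc k))"
    using term_le by (intro suminf_le ennreal_leI) auto
  ultimately show ?thesis
    by (simp add: q_def)
qed

lemma atomless_geometric_pieces:
  assumes at: "atomless M" and X: "X \<in> fmeasurable M" "0 < measure M X"
  obtains D and r :: "nat \<Rightarrow> real" where "disjoint_family D" "\<And>k. D k \<in> sets M" "\<And>k. D k \<subseteq> X"
    "\<And>k. emeasure M (D k) = ennreal (r k)" "\<And>k. 0 < r k" "\<And>k. r k \<le> (1 / 2) ^ Suc k"
proof -
  define \<rho> where "\<rho> = min 1 (measure M X)"
  have \<rho>: "0 < \<rho>" "\<rho> \<le> 1" "\<rho> \<le> measure M X"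
    using X by (auto simp: \<rho>_def)
  define r where "r k = \<rho> * (1 / 2) ^ Suc k" for k
  have r: "0 < r k" "r k \<le> (1 / 2) ^ Suc k" for k
    using \<rho> by (auto simp: r_def mult_le_cancel_right1)
  have geometric: "(\<Sum>j<k. (1 / 2 :: real) ^ Suc j) = 1 - (1 / 2) ^ k" for k
    by (induction k) auto
  have "(\<Sum>j<k. r j) \<le> measure M X" for k
  proof -
    have "(\<Sum>j<k. r j) = \<rho> * (1 - (1 / 2) ^ k)"
      by (simp only: r_def sum_distrib_left[symmetric] geometric)
    also have "\<dots> \<le> \<rho>"
      using \<rho> by (simp add: mult_le_cancel_left1)
    finally show ?thesis
      using \<rho>(3) by linarith
  qed
  then obtain D where D: "disjoint_family D" "\<And>k. D k \<in> sets M" "\<And>k. D k \<subseteq> X"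
    "\<And>k. measure M (D k) = r k"
    using atomless_disjoint_family_measures[OF at X(1), of r] r(1) less_imp_le by metis
  have "emeasure M (D k) = ennreal (r k)" for k
    using fmeasurableI2[OF X(1) D(3) D(2)] D(4) by (simp add: emeasure_eq_measure2)
  then show ?thesis
    using that D r by blast
qed

lemma atomless_Lp_bounded_non_integrable:
  assumes at: "atomless M" and X: "X \<in> fmeasurable M" "0 < measure M X" and b: "b < 1"
  obtains f V where "f \<in> borel_measurable M" "\<And>x. x \<in> space M \<Longrightarrow> f x \<noteq> 0 \<Longrightarrow> x \<in> X"
    "\<And>p. 0 < p \<Longrightarrow> p \<le> b \<Longrightarrow> (\<integral>\<^sup>+x. ennreal (\<bar>f x\<bar> powr p) \<partial>M) \<le> ennreal V"
    "(\<integral>\<^sup>+x. ennreal \<bar>f x\<bar> \<partial>M) = \<infinity>"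
proof -
  obtain D and r :: "nat \<Rightarrow> real" where D: "disjoint_family D" "\<And>k. D k \<in> sets M" "\<And>k. D k \<subseteq> X"
    and eD: "\<And>k. emeasure M (D k) = ennreal (r k)" and r: "\<And>k. 0 < r k" "\<And>k. r k \<le> (1 / 2) ^ Suc k"
    using atomless_geometric_pieces[OF at X] by metis
  define f where "f x = (\<Sum>k. (1 / r k) * indicator (D k) x)" for x
  have "f \<in> borel_measurable M"
    unfolding f_def using D(2) by measurable
  moreover have "x \<in> X" if "f x \<noteq> 0" for x
    using that D(3) by (cases "\<exists>k. x \<in> D k") (auto simp: f_def)
  moreover have "(\<integral>\<^sup>+x. ennreal (\<bar>f x\<bar> powr p) \<partial>M) \<le> ennreal (\<Sum>k. (2 powr (b - 1)) ^ Suc k)"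
    if p: "0 < p" "p \<le> b" for p
  proof -
    have "(\<integral>\<^sup>+x. ennreal (\<bar>f x\<bar> powr p) \<partial>M) = (\<Sum>k. ennreal (\<bar>1 / r k\<bar> powr p) * emeasure M (D k))"
      unfolding f_def using D(1,2) by (rule nn_integral_step_function) simp
    also have "\<dots> = (\<Sum>k. ennreal (r k powr (1 - p)))"
    proof (rule suminf_cong)
      fix k
      have "\<bar>1 / r k\<bar> powr p * r k = r k powr (1 - p)"
        using r(1)[of k] by (simp add: powr_divide powr_diff)
      then show "ennreal (\<bar>1 / r k\<bar> powr p) * emeasure M (D k) = ennreal (r k powr (1 - p))"
        using r(1)[of k] by (simp add: eD ennreal_mult[symmetric])
    qed
    also have "\<dots> \<le> ennreal (\<Sum>k. (2 powr (b - 1)) ^ Suc k)"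
      by (rule suminf_powr_le_geometric[OF r p(2) b])
    finally show ?thesis .
  qed
  moreover have "(\<integral>\<^sup>+x. ennreal \<bar>f x\<bar> \<partial>M) = \<infinity>"
  proof -
    have "(\<integral>\<^sup>+x. ennreal \<bar>f x\<bar> \<partial>M) = (\<Sum>k. ennreal \<bar>1 / r k\<bar> * emeasure M (D k))"
      unfolding f_def using D(1,2) by (rule nn_integral_step_function) simp
    also have "\<dots> = (\<Sum>k. ennreal 1)"
    proof (rule suminf_cong)
      fix k
      show "ennreal \<bar>1 / r k\<bar> * emeasure M (D k) = ennreal 1"
        using r(1)[of k] by (simp add: eD ennreal_mult[symmetric])
    qed
    also have "\<dots> = \<infinity>"
      using summable_iff_suminf_neq_top[of "\<lambda>_. 1"] by (simp add: summable_const_iff)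
    finally show ?thesis .
  qed
  ultimately show ?thesis
    using that by blast
qed

lemma G_assoc_eq_zero:
  assumes sf: "sigma_finite_measure M" and at: "atomless M"
    and a: "0 < a" and b: "a < b" "b < 1" and psi: "\<forall>p\<in>{a<..<b}. 0 < \<psi> p"
    and inf: "(INF p\<in>{a<..<b}. \<psi> p) > 0" and g: "g \<in> G_assoc M \<psi> a b"
  shows "AE x in M. g x = 0"
proof (rule ccontr)
  assume "\<not> (AE x in M. g x = 0)"
  moreover have g_meas: "g \<in> borel_measurable M"
    using g by (simp add: G_assoc_def)
  ultimately obtain c X where c: "0 < c" and X: "X \<in> fmeasurable M" "0 < measure M X"
    and g_ge: "\<And>x. x \<in> X \<Longrightarrow> c \<le> \<bar>g x\<bar>"
    using not_AE_zero_bounded_below[OF sf] by metis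
  obtain f V where f: "f \<in> borel_measurable M" "\<And>x. x \<in> space M \<Longrightarrow> f x \<noteq> 0 \<Longrightarrow> x \<in> X"
    and V: "\<And>p. 0 < p \<Longrightarrow> p \<le> b \<Longrightarrow> (\<integral>\<^sup>+x. ennreal (\<bar>f x\<bar> powr p) \<partial>M) \<le> ennreal V"
    and not_L1: "(\<integral>\<^sup>+x. ennreal \<bar>f x\<bar> \<partial>M) = \<infinity>"
    using atomless_Lp_bounded_non_integrable[OF at X b(2)] by metis
  have "bdd_below (\<psi> ` {a<..<b})"
    using psi by (auto intro!: bdd_belowI[of _ 0] less_imp_le)
  then have "\<forall>p\<in>{a<..<b}. (INF p\<in>{a<..<b}. \<psi> p) \<le> \<psi> p"
    by (auto intro: cINF_lower)
  moreover have "\<forall>p\<in>{a<..<b}. (\<integral>\<^sup>+x. ennreal (\<bar>f x\<bar> powr p) \<partial>M) \<le> ennreal V"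
    using V a by auto
  ultimately have "f \<in> G_space M \<psi> a b"
    by (rule G_space_of_uniform_bound[OF a psi inf _ f(1)])
  then have "(\<integral>\<^sup>+x. ennreal \<bar>f x * g x\<bar> \<partial>M) < \<infinity>"
    using g by (simp add: G_assoc_def)
  moreover have "ennreal c * (\<integral>\<^sup>+x. ennreal \<bar>f x\<bar> \<partial>M) \<le> (\<integral>\<^sup>+x. ennreal \<bar>f x * g x\<bar> \<partial>M)"
  proof -
    have "ennreal (c * \<bar>f x\<bar>) \<le> ennreal \<bar>f x * g x\<bar>" if "x \<in> space M" for x
      using f(2)[OF that] g_ge c by (cases "f x = 0") (auto simp: abs_mult intro!: ennreal_leI mult_right_mono)
    then have "(\<integral>\<^sup>+x. ennreal (c * \<bar>f x\<bar>) \<partial>M) \<le> (\<integral>\<^sup>+x. ennreal \<bar>f x * g x\<bar> \<partial>M)"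
      by (rule nn_integral_mono)
    then show ?thesis
      using c f(1) by (simp add: ennreal_mult nn_integral_cmult)
  qed
  ultimately show False
    using not_L1 c by (simp add: ennreal_mult_top)
qed

theorem theorem5p1:
  fixes M :: "'a measure" and \<psi> :: "real \<Rightarrow> real" and a b :: real
  assumes "sigma_finite_measure M"
    and "atomless M"
    and "emeasure M (space M) > 0"
    and "0 < a" and "a < b" and "b < 1"
    and "continuous_on {a<..<b} \<psi>"
    and "\<forall>p\<in>{a<..<b}. \<psi> p > 0"
    and "(INF p\<in>{a<..<b}. \<psi> p) > 0"
  shows "(\<forall>L\<in>G_dual M \<psi> a b. \<forall>f\<in>G_space M \<psi> a b. L f = 0)
       \<and> (\<forall>g\<in>G_assoc M \<psi> a b. AE x in M. g x = 0)"
proof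
  show "\<forall>L\<in>G_dual M \<psi> a b. \<forall>f\<in>G_space M \<psi> a b. L f = 0"
    using G_dual_eq_zero[OF assms(2,4,5,6,8)] by blast
  show "\<forall>g\<in>G_assoc M \<psi> a b. AE x in M. g x = 0"
    using G_assoc_eq_zero[OF assms(1,2,4,5,6,8,9)] by blast
qed

end
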